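(* Let $A\subseteq\Omega$. If there exists a $\mathcal{P}$-e-process $(E_t)_{t\in\mathbb{N}_0}$ with $\sup_{t\in\mathbb{N}_0}E_t=\infty$ at every point of $A$, then there exists a $\mathcal{P}$-e-process $(E'_t)_{t\in\mathbb{N}_0}$ with $\lim_{t\to\infty}E'_t=\infty$ at every point of $A$; consequently $\mu^*(A)=0$.
   Context: Standing setup: $(\Omega, (\mathcal{F}_t)_{t\in\mathbb{N}_0}, \mathcal{F})$ is a filtered measurable space with $\mathcal{F} = \sigma\big(\bigcup_{t} \mathcal{F}_t\big)$. A stopping time is a map $\tau:\Omega\to\mathbb{N}_0\cup\{\infty\}$ with $\{\tau \le t\}\in\mathcal{F}_t$ for all $t$; $\mathcal{T}$ denotes the set of all stopping times. $\mathcal{P}$ is an arbitrary family of probability measures on $\mathcal{F}$. The inverse-capital measure is defined for every $A\subseteq\Omega$ by $\mu^*(A) = \inf_{\tau\in\mathcal{T}:\, A\subseteq\{\tau<\infty\}} \sup_{\mathbb{P}\in\mathcal{P}} \mathbb{P}(\tau<\infty)$. A $\mathcal{P}$-e-process is a nonnegative (possibly $[0,\infty]$-valued) process $(E_t)_{t\in\mathbb{N}_0}$ adapted to $(\mathcal{F}_t)$ such that $\mathbb{E}_{\mathbb{P}}[E_\tau]\le 1$ for every $\mathbb{P}\in\mathcal{P}$ and every $\tau\in\mathcal{T}$, with the convention $E_\infty=\limsup_{t\to\infty}E_t$. *)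

theory Defs
  imports "HOL-Probability.Probability"
begin

definition filtered_space :: "'a set \<Rightarrow> (nat \<Rightarrow> 'a measure) \<Rightarrow> bool" where
  "filtered_space \<Omega> F \<longleftrightarrow> (\<forall>t. space (F t) = \<Omega>) \<and> (\<forall>s t. s \<le> t \<longrightarrow> sets (F s) \<subseteq> sets (F t))"

definition F_inf :: "'a set \<Rightarrow> (nat \<Rightarrow> 'a measure) \<Rightarrow> 'a measure" where
  "F_inf \<Omega> F = sigma \<Omega> (\<Union>t. sets (F t))"

definition is_stopping_time :: "'a set \<Rightarrow> (nat \<Rightarrow> 'a measure) \<Rightarrow> ('a \<Rightarrow> enat) \<Rightarrow> bool" where
  "is_stopping_time \<Omega> F \<tau> \<longleftrightarrow> (\<forall>t::nat. {\<omega>\<in>\<Omega>. \<tau> \<omega> \<le> enat t} \<in> sets (F t))"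

definition prob_family :: "'a set \<Rightarrow> (nat \<Rightarrow> 'a measure) \<Rightarrow> 'a measure set \<Rightarrow> bool" where
  "prob_family \<Omega> F \<P> \<longleftrightarrow>
     (\<forall>M\<in>\<P>. prob_space M \<and> space M = \<Omega> \<and> sets M = sets (F_inf \<Omega> F))"

definition stopped :: "(nat \<Rightarrow> 'a \<Rightarrow> ennreal) \<Rightarrow> ('a \<Rightarrow> enat) \<Rightarrow> 'a \<Rightarrow> ennreal" where
  "stopped E \<tau> \<omega> = (if \<tau> \<omega> = \<infinity> then limsup (\<lambda>t. E t \<omega>) else E (the_enat (\<tau> \<omega>)) \<omega>)"

definition e_process :: "'a set \<Rightarrow> (nat \<Rightarrow> 'a measure) \<Rightarrow> 'a measure set \<Rightarrow> (nat \<Rightarrow> 'a \<Rightarrow> ennreal) \<Rightarrow> bool" where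
  "e_process \<Omega> F \<P> E \<longleftrightarrow>
     (\<forall>t. E t \<in> borel_measurable (F t)) \<and>
     (\<forall>M\<in>\<P>. \<forall>\<tau>. is_stopping_time \<Omega> F \<tau> \<longrightarrow> (\<integral>\<^sup>+ \<omega>. stopped E \<tau> \<omega> \<partial>M) \<le> 1)"

definition inv_capital :: "'a set \<Rightarrow> (nat \<Rightarrow> 'a measure) \<Rightarrow> 'a measure set \<Rightarrow> 'a set \<Rightarrow> ennreal" where
  "inv_capital \<Omega> F \<P> A =
     (INF \<tau> \<in> {\<tau>. is_stopping_time \<Omega> F \<tau> \<and> A \<subseteq> {\<omega>\<in>\<Omega>. \<tau> \<omega> < \<infinity>}}.
        SUP M \<in> \<P>. emeasure M {\<omega>\<in>\<Omega>. \<tau> \<omega> < \<infinity>})"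

end

theory Submission imports Defs begin

text \<open>Ville's inequality: stopping an e-process \<open>E\<close> when it first reaches a level \<open>c\<close> shows that
  \<open>E\<close> ever reaches \<open>c\<close> with probability at most \<open>1/c\<close> under every \<open>P\<close>. If \<open>sup E = \<infinity>\<close> on \<open>A\<close>,
  these hitting times cover \<open>A\<close>, so \<open>\<mu>*(A) \<le> 1/c\<close> for every \<open>c\<close>. Staking \<open>2^(k+1)\<close> on \<open>E\<close>
  reaching \<open>4^(k+1)\<close>, for every \<open>k\<close>, gives an adapted process whose stopped values are bounded
  by a variable of expectation at most \<open>\<Sum>k 2^(k+1) 4^-(k+1) = 1\<close>, and which increases to
  \<open>\<infinity>\<close> wherever \<open>sup E = \<infinity>\<close>.\<close>

definition hitting_time :: "(nat \<Rightarrow> 'a \<Rightarrow> ennreal) \<Rightarrow> ennreal \<Rightarrow> 'a \<Rightarrow> enat" where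
  "hitting_time E c \<omega> = (if \<exists>s. c \<le> E s \<omega> then enat (LEAST s. c \<le> E s \<omega>) else \<infinity>)"

lemma hitting_time_le_enat_iff: "hitting_time E c \<omega> \<le> enat t \<longleftrightarrow> (\<exists>s\<le>t. c \<le> E s \<omega>)"
proof
  assume "hitting_time E c \<omega> \<le> enat t"
  then have hit: "\<exists>s. c \<le> E s \<omega>" and "(LEAST s. c \<le> E s \<omega>) \<le> t"
    unfolding hitting_time_def by (auto split: if_splits)
  moreover have "c \<le> E (LEAST s. c \<le> E s \<omega>) \<omega>"
    using hit by (rule LeastI_ex)
  ultimately show "\<exists>s\<le>t. c \<le> E s \<omega>" by blast
next
  assume "\<exists>s\<le>t. c \<le> E s \<omega>"
  then obtain s where "s \<le> t" "c \<le> E s \<omega>" by blast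
  moreover have "(LEAST s. c \<le> E s \<omega>) \<le> s"
    using \<open>c \<le> E s \<omega>\<close> by (rule Least_le)
  ultimately show "hitting_time E c \<omega> \<le> enat t"
    unfolding hitting_time_def by auto
qed

lemma hitting_time_less_infinity_iff: "hitting_time E c \<omega> < \<infinity> \<longleftrightarrow> (\<exists>s. c \<le> E s \<omega>)"
  unfolding hitting_time_def by simp

lemma stopped_hitting_time_ge:
  assumes hit: "\<exists>s. c \<le> E s \<omega>"
  shows "c \<le> stopped E (hitting_time E c) \<omega>"
proof -
  have "c \<le> E (LEAST s. c \<le> E s \<omega>) \<omega>" using hit by (rule LeastI_ex)
  then show ?thesis using hit unfolding stopped_def hitting_time_def by simp
qed

definition boosted_process :: "(nat \<Rightarrow> 'a \<Rightarrow> ennreal) \<Rightarrow> nat \<Rightarrow> 'a \<Rightarrow> ennreal" where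
  "boosted_process E t \<omega> =
     (\<Sum>k. ennreal (2 ^ Suc k) * indicator {\<omega>. \<exists>s\<le>t. ennreal (4 ^ Suc k) \<le> E s \<omega>} \<omega>)"

lemma incseq_boosted_process: "incseq (\<lambda>t. boosted_process E t \<omega>)"
  unfolding incseq_def boosted_process_def
  by (intro allI impI suminf_le summableI mult_left_mono indicator_leI) (auto intro: order_trans)

lemma boosted_process_le_sum_levels:
  assumes "\<omega> \<in> \<Omega>"
  shows "boosted_process E t \<omega>
    \<le> (\<Sum>k. ennreal (2 ^ Suc k) * indicator {\<omega>\<in>\<Omega>. \<exists>s. ennreal (4 ^ Suc k) \<le> E s \<omega>} \<omega>)"
  unfolding boosted_process_def
  by (intro suminf_le summableI mult_left_mono indicator_leI) (use assms in blast, simp)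

lemma boosted_process_tendsto_infinity:
  assumes "(SUP t. E t \<omega>) = \<infinity>"
  shows "((\<lambda>t. boosted_process E t \<omega>) \<longlongrightarrow> \<infinity>) sequentially"
proof -
  have "(SUP t. boosted_process E t \<omega>) = top"
  proof (rule ennreal_SUP_eq_top)
    fix n
    have "ennreal (4 ^ Suc n) < (SUP t. E t \<omega>)"
      using assms by (metis ennreal_less_top infinity_ennreal_def)
    then obtain t where t: "ennreal (4 ^ Suc n) \<le> E t \<omega>"
      by (auto simp: less_SUP_iff intro: less_imp_le)
    define f where "f k = ennreal (2 ^ Suc k) * indicator {\<omega>. \<exists>s\<le>t. ennreal (4 ^ Suc k) \<le> E s \<omega>} \<omega>"
      for k
    have "real n \<le> 2 ^ Suc n"
      using less_exp[of "Suc n"] by (metis Suc_lessD less_imp_le of_nat_le_iff of_nat_numeral of_nat_power)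
    then have "of_nat n \<le> ennreal (2 ^ Suc n)"
      by (metis ennreal_leI ennreal_of_nat_eq_real_of_nat)
    also have "\<dots> = f n"
    proof -
      have "\<omega> \<in> {\<omega>. \<exists>s\<le>t. ennreal (4 ^ Suc n) \<le> E s \<omega>}" using t by blast
      then show ?thesis unfolding f_def by simp
    qed
    also have "\<dots> \<le> (\<Sum>k. f k)"
      using sum_le_suminf[OF summableI, of "{n}" f] by simp
    also have "\<dots> = boosted_process E t \<omega>"
      unfolding boosted_process_def f_def ..
    finally show "\<exists>t\<in>UNIV. of_nat n \<le> boosted_process E t \<omega>" by blast
  qed
  then show ?thesis
    using LIMSEQ_SUP[OF incseq_boosted_process[of E \<omega>]] by (simp only: infinity_ennreal_def)
qed

context
  fixes \<Omega> :: "'a set" and F :: "nat \<Rightarrow> 'a measure" and \<P> :: "'a measure set"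
  assumes filtered: "filtered_space \<Omega> F" and family: "prob_family \<Omega> F \<P>"
begin

lemma sets_F_subset_sets_prob:
  assumes "M \<in> \<P>"
  shows "sets (F t) \<subseteq> sets M"
proof -
  have "(\<Union>t. sets (F t)) \<subseteq> Pow \<Omega>"
    using filtered sets.sets_into_space unfolding filtered_space_def by fastforce
  then have "sets M = sigma_sets \<Omega> (\<Union>t. sets (F t))"
    using family assms unfolding prob_family_def F_inf_def by (simp add: sets_measure_of)
  then show ?thesis by (auto intro: sigma_sets.Basic)
qed

lemma sets_level_reached_by:
  fixes E :: "nat \<Rightarrow> 'a \<Rightarrow> 'b::{second_countable_topology, linorder_topology}"
  assumes "\<And>t. E t \<in> borel_measurable (F t)"
  shows "{\<omega>\<in>\<Omega>. \<exists>s\<le>t. c \<le> E s \<omega>} \<in> sets (F t)"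
proof -
  have "{\<omega>\<in>space (F s). c \<le> E s \<omega>} \<in> sets (F s)" for s
    by (rule borel_measurable_le[where f="\<lambda>_. c"]) (simp_all add: assms)
  then have level: "{\<omega>\<in>\<Omega>. c \<le> E s \<omega>} \<in> sets (F s)" for s
    using filtered by (simp add: filtered_space_def)
  have "{\<omega>\<in>\<Omega>. \<exists>s\<le>t. c \<le> E s \<omega>} = (\<Union>s\<in>{..t}. {\<omega>\<in>\<Omega>. c \<le> E s \<omega>})"
    by auto
  also have "\<dots> \<in> sets (F t)"
    using filtered level unfolding filtered_space_def by (intro sets.finite_UN) blast+
  finally show ?thesis .
qed

lemma sets_level_reached:
  fixes E :: "nat \<Rightarrow> 'a \<Rightarrow> 'b::{second_countable_topology, linorder_topology}"
  assumes "\<And>t. E t \<in> borel_measurable (F t)" and "M \<in> \<P>"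
  shows "{\<omega>\<in>\<Omega>. \<exists>s. c \<le> E s \<omega>} \<in> sets M"
proof -
  have "{\<omega>\<in>\<Omega>. \<exists>s. c \<le> E s \<omega>} = (\<Union>t. {\<omega>\<in>\<Omega>. \<exists>s\<le>t. c \<le> E s \<omega>})"
    by auto
  also have "\<dots> \<in> sets M"
    using sets_level_reached_by[OF assms(1)] sets_F_subset_sets_prob[OF assms(2)]
    by (intro sets.countable_UN) blast
  finally show ?thesis .
qed

lemma is_stopping_time_hitting_time:
  "(\<And>t. E t \<in> borel_measurable (F t)) \<Longrightarrow> is_stopping_time \<Omega> F (hitting_time E c)"
  unfolding is_stopping_time_def hitting_time_le_enat_iff by (intro allI sets_level_reached_by)

lemma e_process_emeasure_level_reached_le:
  assumes E: "e_process \<Omega> F \<P> E" and M: "M \<in> \<P>" and "0 < c"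
  shows "emeasure M {\<omega>\<in>\<Omega>. \<exists>s. ennreal c \<le> E s \<omega>} \<le> ennreal (1 / c)"
proof -
  let ?R = "{\<omega>\<in>\<Omega>. \<exists>s. ennreal c \<le> E s \<omega>}"
  have adapted: "\<And>t. E t \<in> borel_measurable (F t)" using E by (simp add: e_process_def)
  have "ennreal c * emeasure M ?R = (\<integral>\<^sup>+ \<omega>. ennreal c * indicator ?R \<omega> \<partial>M)"
    using sets_level_reached[OF adapted M] by (simp add: nn_integral_cmult_indicator)
  also have "\<dots> \<le> (\<integral>\<^sup>+ \<omega>. stopped E (hitting_time E (ennreal c)) \<omega> \<partial>M)"
    by (intro nn_integral_mono) (auto simp: indicator_def intro: stopped_hitting_time_ge)
  also have "\<dots> \<le> 1"
    using E M is_stopping_time_hitting_time[OF adapted] by (simp add: e_process_def)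
  finally have "ennreal c * emeasure M ?R \<le> 1" .
  then have "ennreal (1 / c) * (ennreal c * emeasure M ?R) \<le> ennreal (1 / c)"
    by (metis mult.right_neutral mult_left_mono zero_le)
  then show ?thesis
    using \<open>0 < c\<close> by (simp add: mult.assoc[symmetric] ennreal_mult[symmetric])
qed

lemma inv_capital_le_inverse_level:
  assumes E: "e_process \<Omega> F \<P> E" and "0 < c"
    and A: "A \<subseteq> {\<omega>\<in>\<Omega>. \<exists>s. ennreal c \<le> E s \<omega>}"
  shows "inv_capital \<Omega> F \<P> A \<le> ennreal (1 / c)"
proof -
  have hit: "{\<omega>\<in>\<Omega>. hitting_time E (ennreal c) \<omega> < \<infinity>} = {\<omega>\<in>\<Omega>. \<exists>s. ennreal c \<le> E s \<omega>}"
    unfolding hitting_time_less_infinity_iff ..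
  have "is_stopping_time \<Omega> F (hitting_time E (ennreal c))"
    using E by (intro is_stopping_time_hitting_time) (simp add: e_process_def)
  then have "inv_capital \<Omega> F \<P> A
      \<le> (SUP M \<in> \<P>. emeasure M {\<omega>\<in>\<Omega>. hitting_time E (ennreal c) \<omega> < \<infinity>})"
    unfolding inv_capital_def using A hit by (intro INF_lower) auto
  also have "\<dots> \<le> ennreal (1 / c)"
    unfolding hit using E \<open>0 < c\<close> by (intro SUP_least e_process_emeasure_level_reached_le)
  finally show ?thesis .
qed

lemma inv_capital_eq_0_if_e_process_unbounded:
  assumes E: "e_process \<Omega> F \<P> E" and "A \<subseteq> \<Omega>" and unbounded: "\<forall>\<omega>\<in>A. (SUP t. E t \<omega>) = \<infinity>"
  shows "inv_capital \<Omega> F \<P> A = 0"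
proof -
  have "ennreal c < (SUP t. E t \<omega>)" if "\<omega> \<in> A" for c \<omega>
    using unbounded that by (metis ennreal_less_top infinity_ennreal_def)
  then have A_reached: "A \<subseteq> {\<omega>\<in>\<Omega>. \<exists>s. ennreal c \<le> E s \<omega>}" for c
    using \<open>A \<subseteq> \<Omega>\<close> by (fastforce simp: less_SUP_iff intro: less_imp_le)
  have "inv_capital \<Omega> F \<P> A \<le> ennreal (1 / real (Suc n))" for n
    by (rule inv_capital_le_inverse_level[OF E _ A_reached]) simp
  moreover have "(\<lambda>n. ennreal (1 / real (Suc n))) \<longlonglongrightarrow> 0"
    using tendsto_ennrealI[OF LIMSEQ_inverse_real_of_nat] by (simp add: inverse_eq_divide)
  ultimately have "inv_capital \<Omega> F \<P> A \<le> 0"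
    by (intro LIMSEQ_le_const) auto
  then show ?thesis by simp
qed

lemma borel_measurable_boosted_process:
  assumes "\<And>t. E t \<in> borel_measurable (F t)"
  shows "boosted_process E t \<in> borel_measurable (F t)"
proof -
  have "space (F t) = \<Omega>" using filtered unfolding filtered_space_def by blast
  then have level_set: "{\<omega>. \<exists>s\<le>t. c \<le> E s \<omega>} \<inter> space (F t) = {\<omega>\<in>\<Omega>. \<exists>s\<le>t. c \<le> E s \<omega>}" for c
    by blast
  have "(indicator {\<omega>. \<exists>s\<le>t. c \<le> E s \<omega>} :: 'a \<Rightarrow> ennreal) \<in> borel_measurable (F t)" for c
    unfolding borel_measurable_indicator_iff level_set by (rule sets_level_reached_by[OF assms])
  then show ?thesis
    unfolding boosted_process_def
    by (intro borel_measurable_suminf_order borel_measurable_times_ennreal borel_measurable_const)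
qed

lemma nn_integral_sum_levels_le_1:
  assumes E: "e_process \<Omega> F \<P> E" and M: "M \<in> \<P>"
  shows "(\<integral>\<^sup>+ \<omega>. (\<Sum>k. ennreal (2 ^ Suc k)
            * indicator {\<omega>\<in>\<Omega>. \<exists>s. ennreal (4 ^ Suc k) \<le> E s \<omega>} \<omega>) \<partial>M) \<le> 1"
proof -
  let ?R = "\<lambda>k. {\<omega>\<in>\<Omega>. \<exists>s. ennreal (4 ^ Suc k) \<le> E s \<omega>}"
  have R_sets: "?R k \<in> sets M" for k
    using E M by (intro sets_level_reached) (auto simp: e_process_def)
  have "(\<integral>\<^sup>+ \<omega>. (\<Sum>k. ennreal (2 ^ Suc k) * indicator (?R k) \<omega>) \<partial>M)
      = (\<Sum>k. \<integral>\<^sup>+ \<omega>. ennreal (2 ^ Suc k) * indicator (?R k) \<omega> \<partial>M)"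
    by (intro nn_integral_suminf borel_measurable_times_ennreal borel_measurable_const
        borel_measurable_indicator R_sets)
  also have "\<dots> = (\<Sum>k. ennreal (2 ^ Suc k) * emeasure M (?R k))"
    by (intro suminf_cong nn_integral_cmult_indicator R_sets)
  also have "\<dots> \<le> (\<Sum>k. ennreal ((1/2) ^ Suc k))"
  proof (intro suminf_le summableI)
    fix k
    have "ennreal (2 ^ Suc k) * emeasure M (?R k) \<le> ennreal (2 ^ Suc k) * ennreal (1 / 4 ^ Suc k)"
      using e_process_emeasure_level_reached_le[OF E M, of "4 ^ Suc k"]
      by (intro mult_left_mono) auto
    also have "\<dots> = ennreal ((1/2) ^ Suc k)"
      by (simp add: ennreal_mult[symmetric] power_divide[symmetric] power_mult_distrib[symmetric])
    finally show "ennreal (2 ^ Suc k) * emeasure M (?R k) \<le> ennreal ((1/2) ^ Suc k)" .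
  qed
  also have "\<dots> = 1"
    using power_half_series by (subst suminf_ennreal2) (auto simp: sums_iff)
  finally show ?thesis .
qed

lemma e_process_boosted_process:
  assumes E: "e_process \<Omega> F \<P> E"
  shows "e_process \<Omega> F \<P> (boosted_process E)"
  unfolding e_process_def
proof (intro conjI allI ballI impI)
  show "boosted_process E t \<in> borel_measurable (F t)" for t
    using E by (intro borel_measurable_boosted_process) (simp add: e_process_def)
next
  fix M \<sigma> assume M: "M \<in> \<P>"
  let ?H = "\<lambda>\<omega>. \<Sum>k. ennreal (2 ^ Suc k) * indicator {\<omega>\<in>\<Omega>. \<exists>s. ennreal (4 ^ Suc k) \<le> E s \<omega>} \<omega>"
  have "stopped (boosted_process E) \<sigma> \<omega> \<le> ?H \<omega>" if "\<omega> \<in> \<Omega>" for \<omega>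
    using boosted_process_le_sum_levels[OF that] unfolding stopped_def
    by (auto intro!: Limsup_bounded always_eventually)
  then have "(\<integral>\<^sup>+ \<omega>. stopped (boosted_process E) \<sigma> \<omega> \<partial>M) \<le> (\<integral>\<^sup>+ \<omega>. ?H \<omega> \<partial>M)"
    using family M by (intro nn_integral_mono) (auto simp: prob_family_def)
  also have "\<dots> \<le> 1" by (rule nn_integral_sum_levels_le_1[OF E M])
  finally show "(\<integral>\<^sup>+ \<omega>. stopped (boosted_process E) \<sigma> \<omega> \<partial>M) \<le> 1" .
qed

end

theorem mainTheorem11:
  fixes \<Omega> :: "'a set" and F :: "nat \<Rightarrow> 'a measure" and \<P> :: "'a measure set" and A :: "'a set"
  assumes "filtered_space \<Omega> F"
    and "prob_family \<Omega> F \<P>"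
    and "A \<subseteq> \<Omega>"
    and "\<exists>E. e_process \<Omega> F \<P> E \<and> (\<forall>\<omega>\<in>A. (SUP t. E t \<omega>) = \<infinity>)"
  shows "(\<exists>E'. e_process \<Omega> F \<P> E' \<and> (\<forall>\<omega>\<in>A. ((\<lambda>t. E' t \<omega>) \<longlongrightarrow> \<infinity>) sequentially))
         \<and> inv_capital \<Omega> F \<P> A = 0"
proof -
  obtain E where E: "e_process \<Omega> F \<P> E" and unbounded: "\<forall>\<omega>\<in>A. (SUP t. E t \<omega>) = \<infinity>"
    using assms(4) by blast
  have "e_process \<Omega> F \<P> (boosted_process E)"
    using assms(1,2) E by (rule e_process_boosted_process)
  moreover have "\<forall>\<omega>\<in>A. ((\<lambda>t. boosted_process E t \<omega>) \<longlongrightarrow> \<infinity>) sequentially"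
    using unbounded by (intro ballI boosted_process_tendsto_infinity) simp
  moreover have "inv_capital \<Omega> F \<P> A = 0"
    using assms(1,2) E assms(3) unbounded by (rule inv_capital_eq_0_if_e_process_unbounded)
  ultimately show ?thesis by (intro conjI exI[of _ "boosted_process E"])
qed

end
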